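(* Let $n,m$ be integers with $0<m<n$. Then $\mathcal{V}_n^m=\mathrm{span}\{\tilde\varphi_{n,k}^m:\ k=1,\ldots,n\}$ and $$\langle\tilde\varphi_{n,k}^m,\tilde\varphi_{n,h}^m\rangle_{L^2_w}=\delta_{k,h},\qquad k,h=1,\ldots,n.$$
   Context: Let $w(x)=(1-x^2)^{-1/2}$ on $[-1,1]$ and $\langle f,g\rangle_{L^2_w}=\int_{-1}^1 f(x)g(x)w(x)\,dx$. The orthonormal Chebyshev polynomials are $p_0(x)=\sqrt{1/\pi}$ and $p_r(x)=\sqrt{2/\pi}\cos(r\arccos x)$ for $r\ge1$. The Chebyshev nodes are $x_k^n=\cos\frac{(2k-1)\pi}{2n}$, $k=1,\ldots,n$. For $0<m<n$ set $\mu_{n,r}^m=1$ if $0\le r\le n-m$, $\mu_{n,r}^m=\frac{m+n-r}{2m}$ if $n-m<r<n+m$, and $\mu_{n,r}^m=0$ otherwise. For $r=0,\ldots,n-1$ define $q_{n,r}^m=p_r$ if $0\le r\le n-m$, and $q_{n,r}^m=\mu_{n,r}^m p_r-\mu_{n,2n-r}^m p_{2n-r}$ if $n-m<r<n$; set $\nu_{n,r}^m=1$ if $0\le r\le n-m$ and $\nu_{n,r}^m=\frac{m^2+(n-r)^2}{2m^2}$ if $n-m<r<n$. The space $\mathcal{V}_n^m$ is $\mathrm{span}\{q_{n,r}^m: r=0,\ldots,n-1\}$ (equivalently, the span of the VP polynomials $\Phi_{n,k}^m(x)=\frac{\pi}{n}\sum_{r=0}^{n+m-1}\mu_{n,r}^m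 p_r(x_k^n)p_r(x)$, $k=1,\ldots,n$). Define $\tau_{r,k}^n=\sqrt{\frac{\pi}{n\,\nu_{n,r}^m}}\,p_r(x_k^n)$ and the orthonormal VP scaling functions $\tilde\varphi_{n,k}^m(x)=\sum_{r=0}^{n-1}\tau_{r,k}^n q_{n,r}^m(x)$, $k=1,\ldots,n$. *)

theory Defs
  imports "HOL-Analysis.Analysis"
begin

definition cheb_w :: "real \<Rightarrow> real" where
  "cheb_w x = 1 / sqrt (1 - x\<^sup>2)"

definition cheb_p :: "nat \<Rightarrow> real \<Rightarrow> real" where
  "cheb_p r x = (if r = 0 then sqrt (1 / pi) else sqrt (2 / pi) * cos (real r * arccos x))"

definition cheb_node :: "nat \<Rightarrow> nat \<Rightarrow> real" where
  "cheb_node n k = cos ((2 * real k - 1) * pi / (2 * real n))"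

definition vp_mu :: "nat \<Rightarrow> nat \<Rightarrow> nat \<Rightarrow> real" where
  "vp_mu n m r = (if r \<le> n - m then 1
                  else if r < n + m then (real m + real n - real r) / (2 * real m)
                  else 0)"

definition vp_q :: "nat \<Rightarrow> nat \<Rightarrow> nat \<Rightarrow> real \<Rightarrow> real" where
  "vp_q n m r x = (if r \<le> n - m then cheb_p r x
                   else vp_mu n m r * cheb_p r x - vp_mu n m (2 * n - r) * cheb_p (2 * n - r) x)"

definition vp_nu :: "nat \<Rightarrow> nat \<Rightarrow> nat \<Rightarrow> real" where
  "vp_nu n m r = (if r \<le> n - m then 1
                  else (real m ^ 2 + (real n - real r) ^ 2) / (2 * real m ^ 2))"

definition vp_tau :: "nat \<Rightarrow> nat \<Rightarrow> nat \<Rightarrow> nat \<Rightarrow> real" where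
  "vp_tau n m r k = sqrt (pi / (real n * vp_nu n m r)) * cheb_p r (cheb_node n k)"

definition vp_phi :: "nat \<Rightarrow> nat \<Rightarrow> nat \<Rightarrow> real \<Rightarrow> real" where
  "vp_phi n m k x = (\<Sum>r<n. vp_tau n m r k * vp_q n m r x)"

definition fun_span :: "('i \<Rightarrow> real \<Rightarrow> real) \<Rightarrow> 'i set \<Rightarrow> (real \<Rightarrow> real) set" where
  "fun_span f I = {(\<lambda>x. \<Sum>i\<in>I. c i * f i x) | c. True}"

definition VP_space :: "nat \<Rightarrow> nat \<Rightarrow> (real \<Rightarrow> real) set" where
  "VP_space n m = fun_span (vp_q n m) {0..<n}"

end

theory Submission
  imports Defs
begin

(* Substituting x = cos t turns the weighted inner product on [-1, 1] into an integral of
   cosines over [0, pi], so the p_r are orthonormal.  Since r < n < 2n - r, the two-term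
   polynomials q_r are then orthogonal, with squared norms nu_r = mu_r^2 + mu_(2n-r)^2.
   By the discrete orthogonality of cosines at the Chebyshev nodes (rows and columns,
   both obtained from telescoping sums), the n x n matrix (sqrt (pi/n) p_r(x_k)) is
   orthogonal.  The phi_k are the images of the orthonormal system q_r / sqrt nu_r under
   this matrix, hence orthonormal, and inverting it gives q_r = nu_r sum_k tau_(r,k) phi_k,
   so both families span the same space. *)

lemma sum_cos_even_multiples_telescope:
  "2 * sin y * (\<Sum>r\<in>{1..n}. cos (2 * real r * y)) = sin ((2 * real n + 1) * y) - sin y"
proof (induction n)
  case (Suc n)
  have "2 * sin y * cos (2 * real (Suc n) * y) = sin ((2 * real n + 3) * y) - sin ((2 * real n + 1) * y)"
    using sin_add[of "2 * real (Suc n) * y" y] sin_diff[of "2 * real (Suc n) * y" y]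
    by (simp add: algebra_simps)
  then show ?case
    using Suc by (simp add: distrib_left algebra_simps)
qed simp

lemma sum_cos_odd_multiples_telescope:
  "2 * sin y * (\<Sum>k\<in>{1..n}. cos ((2 * real k - 1) * y)) = sin (2 * real n * y)"
proof (induction n)
  case (Suc n)
  have "2 * sin y * cos ((2 * real (Suc n) - 1) * y) = sin (2 * real (Suc n) * y) - sin (2 * real n * y)"
    using sin_add[of "(2 * real n + 1) * y" y] sin_diff[of "(2 * real n + 1) * y" y]
    by (simp add: algebra_simps)
  then show ?case
    using Suc by (simp add: distrib_left algebra_simps)
qed simp

lemma sin_pi_fraction_nonzero:
  assumes "0 < j" "j < 2 * n"
  shows "sin (real j * pi / (2 * real n)) \<noteq> 0"
proof -
  have "0 < real j * pi / (2 * real n)" "real j * pi / (2 * real n) < pi"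
    using assms by (simp_all add: divide_simps)
  then show ?thesis
    using sin_gt_zero by fastforce
qed

lemma sum_cos_odd_multiples_pi:
  fixes j :: int
  assumes "\<bar>j\<bar> < 2 * int n"
  shows "(\<Sum>k\<in>{1..n}. cos (of_int j * ((2 * real k - 1) * pi / (2 * real n))))
    = (if j = 0 then real n else 0)"
proof (cases "j = 0")
  case False
  define a where "a = nat \<bar>j\<bar>"
  define y where "y = real a * pi / (2 * real n)"
  have "0 < a" "a < 2 * n"
    using assms False by (auto simp: a_def)
  then have "sin y \<noteq> 0" "sin (2 * real n * y) = 0"
    using sin_pi_fraction_nonzero by (auto simp: y_def)
  moreover have "cos (of_int j * ((2 * real k - 1) * pi / (2 * real n))) = cos ((2 * real k - 1) * y)" for k
    using cos_minus[of "of_int \<bar>j\<bar> * _"]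
    by (cases "0 \<le> j") (simp_all add: a_def y_def algebra_simps)
  ultimately show ?thesis
    using sum_cos_odd_multiples_telescope[of y n] False by simp
qed simp

lemma sum_cos_multiples_pi:
  fixes j :: int
  assumes "\<bar>j\<bar> < 2 * int n"
  shows "(\<Sum>r\<in>{1..<n}. cos (real r * (of_int j * pi / real n)))
    = (if j = 0 then real n - 1 else if even j then -1 else 0)"
proof (cases "j = 0")
  case True
  then show ?thesis
    using assms by simp
next
  case False
  define a where "a = nat \<bar>j\<bar>"
  define y where "y = real a * pi / (2 * real n)"
  have a: "0 < a" "a < 2 * n"
    using assms False by (auto simp: a_def)
  then have "sin y \<noteq> 0"
    using sin_pi_fraction_nonzero by (simp add: y_def)
  have "cos (real r * (of_int j * pi / real n)) = cos (2 * real r * y)" for r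
    using cos_minus[of "real r * (of_int \<bar>j\<bar> * pi / real n)"] a
    by (cases "0 \<le> j") (simp_all add: a_def y_def field_simps)
  moreover have "{1..<n} = {1..n - 1}"
    using a by auto
  moreover have "sin ((2 * real (n - 1) + 1) * y) = - ((-1) ^ a) * sin y"
  proof -
    have "(2 * real (n - 1) + 1) * y = real a * pi - y"
      using a by (simp add: y_def of_nat_diff field_simps)
    then show ?thesis
      by (simp add: sin_diff)
  qed
  ultimately have "2 * sin y * (\<Sum>r\<in>{1..<n}. cos (real r * (of_int j * pi / real n)))
      = (- ((-1) ^ a) - 1) * sin y"
    using sum_cos_even_multiples_telescope[of y "n - 1"] by (simp add: algebra_simps)
  with \<open>sin y \<noteq> 0\<close> have "2 * (\<Sum>r\<in>{1..<n}. cos (real r * (of_int j * pi / real n))) = - ((-1) ^ a) - 1"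
    by (metis (no_types, lifting) mult.assoc mult.commute mult_cancel_left)
  moreover have "even a \<longleftrightarrow> even j"
    by (simp add: a_def even_nat_iff)
  ultimately show ?thesis
    using False by (auto simp: field_simps)
qed

definition cheb_norm :: "nat \<Rightarrow> real" where
  "cheb_norm r = (if r = 0 then sqrt (1 / pi) else sqrt (2 / pi))"

lemma cheb_p_eq_cos: "cheb_p r x = cheb_norm r * cos (real r * arccos x)"
  by (simp add: cheb_p_def cheb_norm_def)

lemma cheb_norm_sq: "cheb_norm r * cheb_norm r = (if r = 0 then 1 / pi else 2 / pi)"
  by (simp add: cheb_norm_def)

lemma cheb_p_mult_cheb_p:
  "cheb_p r x * cheb_p s x = cheb_norm r * cheb_norm s / 2
     * (cos (of_int (int r - int s) * arccos x) + cos (of_int (int r + int s) * arccos x))"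
  by (simp add: cheb_p_eq_cos cos_times_cos algebra_simps)

lemma cheb_norm_mult_delta:
  "cheb_norm r * cheb_norm s / 2 * ((if int r - int s = 0 then c else 0) + (if int r + int s = 0 then c else 0))
     = (if r = s then c / pi else 0)"
  by (auto simp: cheb_norm_def)

lemma has_integral_arccos_substitution:
  fixes G g :: "real \<Rightarrow> real"
  assumes G: "\<And>t. (G has_real_derivative g t) (at t)"
  shows "((\<lambda>x. g (arccos x) * cheb_w x) has_integral (G pi - G 0)) {-1..1}"
proof -
  have "continuous_on UNIV G"
    using G by (meson DERIV_isCont continuous_at_imp_continuous_on)
  then have cont: "continuous_on {-1..1} (\<lambda>x. - G (arccos x))"
    by (intro continuous_on_minus continuous_on_compose2[OF _ continuous_on_arccos']) auto
  have "((\<lambda>x. - G (arccos x)) has_real_derivative g (arccos x) * cheb_w x) (at x)"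
    if "x \<in> {-1<..<1}" for x
  proof -
    have "-1 < x" "x < 1"
      using that by auto
    from DERIV_minus[OF DERIV_chain2[OF G DERIV_arccos[OF this]]]
    show ?thesis
      by (simp add: cheb_w_def divide_inverse)
  qed
  then have "((\<lambda>x. g (arccos x) * cheb_w x) has_integral (- G (arccos 1) - - G (arccos (-1)))) {-1..1}"
    by (intro fundamental_theorem_of_calculus_interior[OF _ cont])
       (auto simp: has_real_derivative_iff_has_vector_derivative)
  then show ?thesis
    by simp
qed

lemma has_integral_cos_arccos:
  fixes j :: int
  shows "((\<lambda>x. cos (of_int j * arccos x) * cheb_w x) has_integral (if j = 0 then pi else 0)) {-1..1}"
proof (cases "j = 0")
  case True
  have "((\<lambda>t. t) has_real_derivative cos (of_int j * t)) (at t)" for t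
    using True by (auto intro!: derivative_eq_intros)
  from has_integral_arccos_substitution[OF this] show ?thesis
    using True by simp
next
  case False
  have "((\<lambda>t. sin (of_int j * t) / of_int j) has_real_derivative cos (of_int j * t)) (at t)" for t
    using False by (auto intro!: derivative_eq_intros)
  from has_integral_arccos_substitution[OF this] show ?thesis
    using False by (simp add: mult.commute)
qed

lemma cheb_p_orthonormal:
  "((\<lambda>x. cheb_p r x * cheb_p s x * cheb_w x) has_integral (if r = s then 1 else 0)) {-1..1}"
proof -
  define C where "C = cheb_norm r * cheb_norm s / 2"
  have integrand: "(\<lambda>x. cheb_p r x * cheb_p s x * cheb_w x)
      = (\<lambda>x. C * (cos (of_int (int r - int s) * arccos x) * cheb_w x
                  + cos (of_int (int r + int s) * arccos x) * cheb_w x))"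
    by (simp add: fun_eq_iff cheb_p_mult_cheb_p C_def algebra_simps)
  have integral_value: "(if r = s then 1 else 0)
      = C * ((if int r - int s = 0 then pi else 0) + (if int r + int s = 0 then pi else 0))"
    unfolding C_def cheb_norm_mult_delta by simp
  show ?thesis
    unfolding integrand integral_value by (intro has_integral_mult_right has_integral_add has_integral_cos_arccos)
qed

lemma arccos_cheb_node:
  assumes "1 \<le> k" "k \<le> n"
  shows "arccos (cheb_node n k) = (2 * real k - 1) * pi / (2 * real n)"
proof -
  have "0 \<le> (2 * real k - 1) * pi / (2 * real n)" "(2 * real k - 1) * pi / (2 * real n) \<le> pi"
    using assms by (simp_all add: divide_simps)
  then show ?thesis
    by (simp add: cheb_node_def arccos_cos)
qed

lemma cheb_p_nodes_orthogonal:
  assumes "r < n" "s < n"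
  shows "(\<Sum>k\<in>{1..n}. cheb_p r (cheb_node n k) * cheb_p s (cheb_node n k)) = (if r = s then real n / pi else 0)"
proof -
  define C where "C = cheb_norm r * cheb_norm s / 2"
  define S where "S j = (\<Sum>k\<in>{1..n}. cos (of_int j * ((2 * real k - 1) * pi / (2 * real n))))" for j
  have S_diff: "S (int r - int s) = (if int r - int s = 0 then real n else 0)"
    and S_sum: "S (int r + int s) = (if int r + int s = 0 then real n else 0)"
    unfolding S_def using assms by (intro sum_cos_odd_multiples_pi; simp)+
  have "(\<Sum>k\<in>{1..n}. cheb_p r (cheb_node n k) * cheb_p s (cheb_node n k))
      = (\<Sum>k\<in>{1..n}. C * (cos (of_int (int r - int s) * ((2 * real k - 1) * pi / (2 * real n)))
                         + cos (of_int (int r + int s) * ((2 * real k - 1) * pi / (2 * real n)))))"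
    by (intro sum.cong refl) (simp add: cheb_p_mult_cheb_p arccos_cheb_node C_def)
  also have "\<dots> = C * (S (int r - int s) + S (int r + int s))"
    by (simp only: S_def sum.distrib[symmetric] sum_distrib_left)
  also have "\<dots> = (if r = s then real n / pi else 0)"
    unfolding S_diff S_sum C_def by (rule cheb_norm_mult_delta)
  finally show ?thesis .
qed

lemma cheb_p_nodes_orthogonal_dual:
  assumes "k \<in> {1..n}" "h \<in> {1..n}"
  shows "(\<Sum>r<n. cheb_p r (cheb_node n k) * cheb_p r (cheb_node n h)) = (if k = h then real n / pi else 0)"
proof -
  define T where "T j = (\<Sum>r\<in>{1..<n}. cos (real r * (of_int j * pi / real n)))" for j
  have T_diff: "T (int k - int h) = (if k = h then real n - 1 else if even (int k - int h) then -1 else 0)"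
    and T_sum: "T (int k + int h - 1) = (if even (int k + int h - 1) then -1 else 0)"
    unfolding T_def using assms by (subst sum_cos_multiples_pi; auto)+
  have "cheb_p r (cheb_node n k) * cheb_p r (cheb_node n h)
      = (cos (real r * (of_int (int k - int h) * pi / real n))
         + cos (real r * (of_int (int k + int h - 1) * pi / real n))) / pi"
    if "r \<noteq> 0" for r
  proof -
    have "cheb_p r (cheb_node n k) * cheb_p r (cheb_node n h)
        = cheb_norm r * cheb_norm r * (cos (real r * ((2 * real k - 1) * pi / (2 * real n)))
                    * cos (real r * ((2 * real h - 1) * pi / (2 * real n))))"
      using assms by (simp add: cheb_p_eq_cos arccos_cheb_node mult_ac)
    moreover have "real r * ((2 * real k - 1) * pi / (2 * real n)) - real r * ((2 * real h - 1) * pi / (2 * real n))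
        = real r * (of_int (int k - int h) * pi / real n)"
      "real r * ((2 * real k - 1) * pi / (2 * real n)) + real r * ((2 * real h - 1) * pi / (2 * real n))
        = real r * (of_int (int k + int h - 1) * pi / real n)"
      using assms by (simp_all add: field_simps)
    ultimately show ?thesis
      using that by (simp add: cheb_norm_sq cos_times_cos add_divide_distrib)
  qed
  then have "(\<Sum>r\<in>{1..<n}. cheb_p r (cheb_node n k) * cheb_p r (cheb_node n h))
      = (T (int k - int h) + T (int k + int h - 1)) / pi"
    by (simp add: T_def sum.distrib[symmetric] sum_divide_distrib)
  moreover have "{..<n} = insert 0 {1..<n}"
    using assms by auto
  ultimately have "(\<Sum>r<n. cheb_p r (cheb_node n k) * cheb_p r (cheb_node n h))
      = (1 + T (int k - int h) + T (int k + int h - 1)) / pi"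
    by (simp add: cheb_p_def add_divide_distrib)
  moreover have "odd (int k - int h + (int k + int h - 1))"
    by presburger
  ultimately show ?thesis
    unfolding T_diff T_sum by auto
qed

lemma has_integral_orthogonal_combination:
  fixes u :: "'i \<Rightarrow> real \<Rightarrow> real"
  assumes "finite A" "finite B"
    and orth: "\<And>i j. i \<in> A \<Longrightarrow> j \<in> B \<Longrightarrow> ((\<lambda>x. u i x * u j x * w x) has_integral (if i = j then N i else 0)) S"
  shows "((\<lambda>x. (\<Sum>i\<in>A. a i * u i x) * (\<Sum>j\<in>B. b j * u j x) * w x) has_integral (\<Sum>i\<in>A \<inter> B. a i * b i * N i)) S"
proof -
  have integrand: "(\<lambda>x. (\<Sum>i\<in>A. a i * u i x) * (\<Sum>j\<in>B. b j * u j x) * w x)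
      = (\<lambda>x. \<Sum>i\<in>A. \<Sum>j\<in>B. a i * b j * (u i x * u j x * w x))"
  proof
    fix x
    have "(\<Sum>i\<in>A. a i * u i x) * (\<Sum>j\<in>B. b j * u j x) * w x
        = (\<Sum>i\<in>A. \<Sum>j\<in>B. a i * u i x * (b j * u j x) * w x)"
      unfolding sum_product by (simp only: sum_distrib_right)
    then show "(\<Sum>i\<in>A. a i * u i x) * (\<Sum>j\<in>B. b j * u j x) * w x
        = (\<Sum>i\<in>A. \<Sum>j\<in>B. a i * b j * (u i x * u j x * w x))"
      by (simp add: mult_ac)
  qed
  have "(\<Sum>i\<in>A. \<Sum>j\<in>B. a i * b j * (if i = j then N i else 0))
      = (\<Sum>i\<in>A. \<Sum>j\<in>B. if i = j then a i * b i * N i else 0)"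
    by (intro sum.cong) auto
  also have "\<dots> = (\<Sum>i\<in>A \<inter> B. a i * b i * N i)"
    using assms(1,2) by (simp add: sum.inter_restrict)
  finally have integral_value:
    "(\<Sum>i\<in>A. \<Sum>j\<in>B. a i * b j * (if i = j then N i else 0)) = (\<Sum>i\<in>A \<inter> B. a i * b i * N i)" .
  have "((\<lambda>x. \<Sum>i\<in>A. \<Sum>j\<in>B. a i * b j * (u i x * u j x * w x))
      has_integral (\<Sum>i\<in>A. \<Sum>j\<in>B. a i * b j * (if i = j then N i else 0))) S"
    using assms by (intro has_integral_sum has_integral_mult_right orth) auto
  then show ?thesis
    unfolding integrand integral_value .
qed

(* For r \<le> n - m the definition of q_r has no second term; this agrees with the formula
   below because 2n - r \<ge> n + m, so that mu_(2n-r) = 0. *)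
lemma vp_q_eq_two_terms:
  assumes "m \<le> n" "r < n"
  shows "vp_q n m r x = vp_mu n m r * cheb_p r x - vp_mu n m (2 * n - r) * cheb_p (2 * n - r) x"
  using assms by (auto simp: vp_q_def vp_mu_def)

lemma vp_nu_eq_vp_mu_sq:
  assumes "m \<le> n" "r < n"
  shows "vp_nu n m r = vp_mu n m r ^ 2 + vp_mu n m (2 * n - r) ^ 2"
proof (cases "r \<le> n - m")
  case False
  then have mu: "vp_mu n m r = (real m + real n - real r) / (2 * real m)"
    "vp_mu n m (2 * n - r) = (real m - real n + real r) / (2 * real m)"
    using assms by (auto simp: vp_mu_def of_nat_diff)
  have "m \<noteq> 0"
    using False assms by auto
  with False show ?thesis
    unfolding mu by (simp add: vp_nu_def field_simps power2_eq_square)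
qed (use assms in \<open>auto simp: vp_nu_def vp_mu_def\<close>)

lemma vp_nu_pos: "0 < m \<Longrightarrow> 0 < vp_nu n m r"
  by (simp add: vp_nu_def add_pos_nonneg)

lemma vp_q_orthogonal:
  assumes "m \<le> n" "r < n" "s < n"
  shows "((\<lambda>x. vp_q n m r x * vp_q n m s x * cheb_w x) has_integral (if r = s then vp_nu n m r else 0)) {-1..1}"
proof -
  define c where "c l i = (if i = l then vp_mu n m l else - vp_mu n m (2 * n - l))" for l i
  have q: "vp_q n m l x = (\<Sum>i\<in>{l, 2 * n - l}. c l i * cheb_p i x)" if "l < n" for l x
    using vp_q_eq_two_terms[OF assms(1) that] that by (simp add: c_def)
  have integrand: "(\<lambda>x. vp_q n m r x * vp_q n m s x * cheb_w x)
      = (\<lambda>x. (\<Sum>i\<in>{r, 2 * n - r}. c r i * cheb_p i x) * (\<Sum>j\<in>{s, 2 * n - s}. c s j * cheb_p j x) * cheb_w x)"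
    using assms by (simp add: q)
  have integral_value:
    "(if r = s then vp_nu n m r else 0) = (\<Sum>i\<in>{r, 2 * n - r} \<inter> {s, 2 * n - s}. c r i * c s i * 1)"
  proof (cases "r = s")
    case True
    then show ?thesis
      using assms by (simp add: vp_nu_eq_vp_mu_sq c_def power2_eq_square)
  next
    case False
    then have "{r, 2 * n - r} \<inter> {s, 2 * n - s} = {}"
      using assms by auto
    with False show ?thesis
      by simp
  qed
  show ?thesis
    unfolding integrand integral_value
    by (rule has_integral_orthogonal_combination) (simp_all add: cheb_p_orthonormal)
qed

lemma vp_tau_mult_vp_tau_same:
  assumes "0 < m"
  shows "vp_tau n m r k * vp_tau n m r h
    = pi / (real n * vp_nu n m r) * (cheb_p r (cheb_node n k) * cheb_p r (cheb_node n h))"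
  using vp_nu_pos[OF assms, of n r] by (simp add: vp_tau_def mult_ac)

lemma vp_tau_nodes_orthogonal:
  assumes "0 < m" "r < n" "s < n"
  shows "(\<Sum>k\<in>{1..n}. vp_tau n m r k * vp_tau n m s k) = (if r = s then 1 / vp_nu n m r else 0)"
proof (cases "r = s")
  case True
  have "(\<Sum>k\<in>{1..n}. vp_tau n m r k * vp_tau n m r k)
      = pi / (real n * vp_nu n m r) * (\<Sum>k\<in>{1..n}. cheb_p r (cheb_node n k) * cheb_p r (cheb_node n k))"
    using assms by (simp add: vp_tau_mult_vp_tau_same sum_distrib_left)
  also have "\<dots> = 1 / vp_nu n m r"
    unfolding cheb_p_nodes_orthogonal[OF assms(2,2)] using assms by simp
  finally show ?thesis
    using True by simp
next
  case False
  have "(\<Sum>k\<in>{1..n}. vp_tau n m r k * vp_tau n m s k)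
      = sqrt (pi / (real n * vp_nu n m r)) * sqrt (pi / (real n * vp_nu n m s))
        * (\<Sum>k\<in>{1..n}. cheb_p r (cheb_node n k) * cheb_p s (cheb_node n k))"
    by (simp add: vp_tau_def sum_distrib_left mult_ac)
  then show ?thesis
    unfolding cheb_p_nodes_orthogonal[OF assms(2,3)] using False by simp
qed

lemma vp_phi_orthonormal:
  assumes "0 < m" "m \<le> n" "k \<in> {1..n}" "h \<in> {1..n}"
  shows "((\<lambda>x. vp_phi n m k x * vp_phi n m h x * cheb_w x) has_integral (if k = h then 1 else 0)) {-1..1}"
proof -
  have integral: "((\<lambda>x. vp_phi n m k x * vp_phi n m h x * cheb_w x)
      has_integral (\<Sum>r<n. vp_tau n m r k * vp_tau n m r h * vp_nu n m r)) {-1..1}"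
    unfolding vp_phi_def
    by (rule has_integral_orthogonal_combination[of "{..<n}" "{..<n}", simplified])
       (simp add: vp_q_orthogonal assms)
  have "vp_nu n m r \<noteq> 0" for r
    using vp_nu_pos[OF assms(1), of n r] by linarith
  then have "(\<Sum>r<n. vp_tau n m r k * vp_tau n m r h * vp_nu n m r)
      = pi / real n * (\<Sum>r<n. cheb_p r (cheb_node n k) * cheb_p r (cheb_node n h))"
    using assms by (simp add: vp_tau_mult_vp_tau_same sum_distrib_left)
  also have "\<dots> = (if k = h then 1 else 0)"
    unfolding cheb_p_nodes_orthogonal_dual[OF assms(3,4)] using assms by auto
  finally show ?thesis
    using integral by simp
qed

lemma vp_q_eq_sum_vp_phi:
  assumes "0 < m" "s < n"
  shows "vp_q n m s = (\<lambda>x. \<Sum>k\<in>{1..n}. vp_nu n m s * vp_tau n m s k * vp_phi n m k x)"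
proof
  fix x
  have "(\<Sum>k\<in>{1..n}. vp_nu n m s * vp_tau n m s k * vp_phi n m k x)
      = (\<Sum>k\<in>{1..n}. \<Sum>r<n. vp_nu n m s * vp_tau n m s k * vp_tau n m r k * vp_q n m r x)"
    unfolding vp_phi_def by (simp add: sum_distrib_left mult.assoc)
  also have "\<dots> = (\<Sum>r<n. \<Sum>k\<in>{1..n}. vp_nu n m s * vp_tau n m s k * vp_tau n m r k * vp_q n m r x)"
    by (rule sum.swap)
  also have "\<dots> = (\<Sum>r<n. vp_nu n m s * (\<Sum>k\<in>{1..n}. vp_tau n m s k * vp_tau n m r k) * vp_q n m r x)"
    by (simp add: sum_distrib_left sum_distrib_right mult.assoc)
  also have "\<dots> = (\<Sum>r<n. if r = s then vp_q n m r x else 0)"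
    using vp_nu_pos[OF assms(1), of n s]
    by (intro sum.cong refl, subst vp_tau_nodes_orthogonal) (use assms in auto)
  also have "\<dots> = vp_q n m s x"
    using assms by simp
  finally show "vp_q n m s x = (\<Sum>k\<in>{1..n}. vp_nu n m s * vp_tau n m s k * vp_phi n m k x)" ..
qed

lemma fun_span_memI: "(\<lambda>x. \<Sum>i\<in>I. c i * f i x) \<in> fun_span f I"
  unfolding fun_span_def by blast

lemma fun_span_subset:
  assumes "\<And>i. i \<in> I \<Longrightarrow> f i \<in> fun_span g J"
  shows "fun_span f I \<subseteq> fun_span g J"
proof
  have "\<forall>i\<in>I. \<exists>c. f i = (\<lambda>x. \<Sum>j\<in>J. c j * g j x)"
    using assms unfolding fun_span_def by blast
  from bchoice[OF this] obtain c where c: "\<forall>i\<in>I. f i = (\<lambda>x. \<Sum>j\<in>J. c i j * g j x)"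
    by blast
  fix F
  assume "F \<in> fun_span f I"
  then obtain a where "F = (\<lambda>x. \<Sum>i\<in>I. a i * f i x)"
    unfolding fun_span_def by blast
  also have "\<dots> = (\<lambda>x. \<Sum>i\<in>I. \<Sum>j\<in>J. a i * c i j * g j x)"
    by (intro ext sum.cong refl) (simp add: c sum_distrib_left mult.assoc)
  also have "\<dots> = (\<lambda>x. \<Sum>j\<in>J. \<Sum>i\<in>I. a i * c i j * g j x)"
    by (rule ext) (rule sum.swap)
  also have "\<dots> = (\<lambda>x. \<Sum>j\<in>J. (\<Sum>i\<in>I. a i * c i j) * g j x)"
    by (simp add: sum_distrib_right)
  finally show "F \<in> fun_span g J"
    by (simp only: fun_span_memI)
qed

theorem proposition1:
  fixes n m :: nat
  assumes "0 < m" and "m < n"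
  shows "VP_space n m = fun_span (vp_phi n m) {1..n}
    \<and> (\<forall>k\<in>{1..n}. \<forall>h\<in>{1..n}.
         ((\<lambda>x. vp_phi n m k x * vp_phi n m h x * cheb_w x) has_integral
            (if k = h then 1 else 0)) {-1..1})"
proof (intro conjI ballI equalityI)
  show "VP_space n m \<subseteq> fun_span (vp_phi n m) {1..n}"
    unfolding VP_space_def
    using vp_q_eq_sum_vp_phi[OF assms(1)] by (intro fun_span_subset) (simp add: fun_span_memI)
  show "fun_span (vp_phi n m) {1..n} \<subseteq> VP_space n m"
    unfolding VP_space_def vp_phi_def atLeast0LessThan
    by (intro fun_span_subset fun_span_memI)
  show "((\<lambda>x. vp_phi n m k x * vp_phi n m h x * cheb_w x) has_integral (if k = h then 1 else 0)) {-1..1}"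
    if "k \<in> {1..n}" "h \<in> {1..n}" for k h
    using vp_phi_orthonormal assms that by simp
qed

end
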